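(* There is a universal constant $C$ such that for all $\rho_0,\rho_1,\rho_2>0$, all $\Theta_{01},\Theta_{02},\Theta_{12}\in[0,\pi/2]$, and $j\in\{1,2\}$, $$\frac{\partial\Phi_0(\rho_0,\rho_1,\rho_2;\Theta_{01},\Theta_{02},\Theta_{12})}{\partial(\log\rho_j)}\le C\,\Phi_0(\rho_0,\rho_1,\rho_2;\Theta_{01},\Theta_{02},\Theta_{12}).$$
   Context: Given $\rho_0,\rho_1,\rho_2>0$ and $\Theta_{ij}\in[0,\pi/2]$ for $(i,j)\in\{(0,1),(0,2),(1,2)\}$, there is a configuration of three closed disks $D_0,D_1,D_2$ in $\mathbb{C}$, unique up to euclidean isometries, with euclidean radii $\rho(D_k)=\rho_k$ and with the dihedral angle of $D_i$ and $D_j$ equal to $\Theta_{ij}$ (the dihedral angle of two intersecting disks $D,D'$ being the angle in $[0,\pi)$ between the clockwise tangent of $\partial D$ and the counterclockwise tangent of $\partial D'$ at a point of $\partial D\cap\partial D'$). Let $A_k$ be the center of $D_k$, and let $\Phi_k(\rho_0,\rho_1,\rho_2;\Theta_{01},\Theta_{02},\Theta_{12})$ be the angle of the triangle $A_0A_1A_2$ at $A_k$. *)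

theory Defs
  imports "HOL-Analysis.Analysis"
begin

text \<open>Distance between the centers of two closed disks of radii ri, rj whose
dihedral angle (in the paper's convention: 0 = externally tangent,
pi/2 = orthogonal) is Th.\<close>
definition center_dist :: "real \<Rightarrow> real \<Rightarrow> real \<Rightarrow> real" where
  "center_dist ri rj Th = sqrt (ri\<^sup>2 + rj\<^sup>2 + 2 * ri * rj * cos Th)"

definition tri_angle :: "real \<Rightarrow> real \<Rightarrow> real \<Rightarrow> real" where
  "tri_angle a b c = arccos ((a\<^sup>2 + b\<^sup>2 - c\<^sup>2) / (2 * a * b))"

definition Phi0 :: "real \<Rightarrow> real \<Rightarrow> real \<Rightarrow> real \<Rightarrow> real \<Rightarrow> real \<Rightarrow> real" where
  "Phi0 r0 r1 r2 T01 T02 T12 =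
     tri_angle (center_dist r0 r1 T01) (center_dist r0 r2 T02) (center_dist r1 r2 T12)"

end

theory Submission
  imports Defs
begin

(* Let a = |A0 A1|, b = |A0 A2| and let E be the Gram determinant of A1 - A0, A2 - A0, so that
   sin Phi0 = sqrt E / (a b).  Differentiating the law of cosines gives
   d Phi0 / d (log r1) = r0 r1 M / (a^2 sqrt E) for an explicit polynomial M >= 0 in the radii and
   the cosines of the dihedral angles.  A polynomial inequality gives
   r0 r1 (r0 + r2) M <= 8 (r0 + r1) E, and since the cosines lie in [0,1] we have b <= r0 + r2 and
   2 (r0 + r1) <= 3 a.  Together: d Phi0 / d (log r1) <= 12 sin Phi0 <= 12 Phi0.  The case j = 2
   is the same after exchanging the roles of D1 and D2. *)

lemma cos_bounds_right_angle:
  assumes "T \<in> {0..pi/2}"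
  shows "0 \<le> cos T" "cos T \<le> 1"
  using assms by (auto intro!: cos_ge_zero)

lemma sqrt_one_minus_square_le_arccos:
  fixes g :: real
  assumes "\<bar>g\<bar> \<le> 1"
  shows "sqrt (1 - g\<^sup>2) \<le> arccos g"
proof -
  have "sin (arccos g) = sqrt (1 - g\<^sup>2)" using assms by (rule sin_arccos_abs)
  moreover have "0 \<le> arccos g" using assms by (intro arccos_lbound) auto
  ultimately show ?thesis by (metis sin_x_le_x)
qed

lemma one_minus_cosine_law_square:
  fixes X Y Z :: real
  assumes "X > 0" "Y > 0"
  shows "1 - ((X + Y - Z) / (2 * sqrt X * sqrt Y))\<^sup>2 = (4 * X * Y - (X + Y - Z)\<^sup>2) / (4 * X * Y)"
  using assms by (simp add: field_simps power_mult_distrib)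

lemma has_real_derivative_arccos_cosine_law:
  fixes X Z :: "real \<Rightarrow> real" and X' Y Z' t :: real
  defines "D \<equiv> 4 * X t * Y - (X t + Y - Z t)\<^sup>2"
  assumes dX: "(X has_real_derivative X') (at t)" and dZ: "(Z has_real_derivative Z') (at t)"
    and X: "X t > 0" and Y: "Y > 0" and D: "D > 0"
  shows "((\<lambda>s. arccos ((X s + Y - Z s) / (2 * sqrt (X s) * sqrt Y))) has_real_derivative
           (2 * X t * Z' - X' * (X t + Z t - Y)) / (2 * X t * sqrt D)) (at t)"
proof -
  define g where "g = (X t + Y - Z t) / (2 * sqrt (X t) * sqrt Y)"
  have g2: "1 - g\<^sup>2 = D / (4 * X t * Y)"
    unfolding g_def D_def using X Y by (rule one_minus_cosine_law_square)
  have "0 < 1 - g\<^sup>2"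
    using g2 D X Y by simp
  then have "\<bar>g\<bar> < 1"
    by (simp add: abs_square_less_1)
  then have sqrt_g: "sqrt (1 - g\<^sup>2) = sqrt D / (2 * sqrt (X t) * sqrt Y)"
    using X Y by (simp add: g2 real_sqrt_divide real_sqrt_mult)
  have dg: "((\<lambda>s. (X s + Y - Z s) / (2 * sqrt (X s) * sqrt Y)) has_real_derivative
      ((X' - Z') * (2 * sqrt (X t) * sqrt Y) - (X t + Y - Z t) * (X' / sqrt (X t) * sqrt Y))
        / (2 * sqrt (X t) * sqrt Y)\<^sup>2) (at t)"
    using X Y by (auto intro!: derivative_eq_intros dX dZ simp: field_simps)
  have "- 1 < g" "g < 1" using \<open>\<bar>g\<bar> < 1\<close> by auto
  note arccos_at_g = DERIV_arccos[OF this, unfolded g_def]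
  show ?thesis
  proof (rule DERIV_cong[OF DERIV_chain2[OF arccos_at_g dg]])
    define a b where "a = sqrt (X t)" and "b = sqrt Y"
    have "a > 0" "b > 0" "sqrt D > 0" using X Y D by (simp_all add: a_def b_def)
    moreover have "X t = a\<^sup>2" "Y = b\<^sup>2" using X Y by (simp_all add: a_def b_def)
    ultimately show "inverse (- sqrt (1 - ((X t + Y - Z t) / (2 * sqrt (X t) * sqrt Y))\<^sup>2)) *
      (((X' - Z') * (2 * sqrt (X t) * sqrt Y) - (X t + Y - Z t) * (X' / sqrt (X t) * sqrt Y))
        / (2 * sqrt (X t) * sqrt Y)\<^sup>2) =
      (2 * X t * Z' - X' * (X t + Z t - Y)) / (2 * X t * sqrt D)"
      unfolding sqrt_g[unfolded g_def] unfolding a_def[symmetric] b_def[symmetric]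
      by (simp add: field_simps power2_eq_square)
  qed
qed

lemma sine_le_tri_angle:
  fixes a b c :: real
  assumes a: "0 < a" and b: "0 < b" and D: "0 \<le> 4 * a\<^sup>2 * b\<^sup>2 - (a\<^sup>2 + b\<^sup>2 - c\<^sup>2)\<^sup>2"
  shows "sqrt (4 * a\<^sup>2 * b\<^sup>2 - (a\<^sup>2 + b\<^sup>2 - c\<^sup>2)\<^sup>2) / (2 * a * b) \<le> tri_angle a b c"
proof -
  define g where "g = (a\<^sup>2 + b\<^sup>2 - c\<^sup>2) / (2 * a * b)"
  have one_minus_g2: "1 - g\<^sup>2 = (4 * a\<^sup>2 * b\<^sup>2 - (a\<^sup>2 + b\<^sup>2 - c\<^sup>2)\<^sup>2) / (2 * a * b)\<^sup>2"
    using one_minus_cosine_law_square[of "a\<^sup>2" "b\<^sup>2" "c\<^sup>2"] a b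
    by (simp add: g_def power_mult_distrib mult.assoc)
  then have sqrt_g: "sqrt (1 - g\<^sup>2) = sqrt (4 * a\<^sup>2 * b\<^sup>2 - (a\<^sup>2 + b\<^sup>2 - c\<^sup>2)\<^sup>2) / (2 * a * b)"
    using a b by (simp add: real_sqrt_divide)
  have "0 \<le> 1 - g\<^sup>2"
    using D unfolding one_minus_g2 by simp
  then have "\<bar>g\<bar> \<le> 1"
    by (simp add: abs_square_le_1)
  then have "sqrt (1 - g\<^sup>2) \<le> arccos g"
    by (rule sqrt_one_minus_square_le_arccos)
  then show ?thesis
    unfolding sqrt_g by (simp add: tri_angle_def g_def)
qed

lemma center_dist_radicand_nonneg: "0 \<le> (ri::real)\<^sup>2 + rj\<^sup>2 + 2 * ri * rj * cos Th"
proof -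
  have "\<bar>2 * ri * rj * cos Th\<bar> \<le> 2 * \<bar>ri\<bar> * \<bar>rj\<bar>"
    using abs_cos_le_one[of Th] by (simp add: abs_mult mult_left_le)
  moreover have "0 \<le> (\<bar>ri\<bar> - \<bar>rj\<bar>)\<^sup>2" by simp
  ultimately show ?thesis
    by (simp add: power2_eq_square algebra_simps abs_le_iff)
qed

lemma center_dist_nonneg: "0 \<le> center_dist ri rj Th"
  by (simp add: center_dist_def center_dist_radicand_nonneg)

lemma center_dist_sq: "(center_dist ri rj Th)\<^sup>2 = ri\<^sup>2 + rj\<^sup>2 + 2 * ri * rj * cos Th"
  by (simp add: center_dist_def center_dist_radicand_nonneg)

lemma center_dist_le_add:
  assumes "0 \<le> ri" "0 \<le> rj"
  shows "center_dist ri rj Th \<le> ri + rj"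
proof -
  have "ri * rj * cos Th \<le> ri * rj"
    using assms by (simp add: mult_left_le)
  then have "ri\<^sup>2 + rj\<^sup>2 + 2 * ri * rj * cos Th \<le> (ri + rj)\<^sup>2"
    by (simp add: power2_eq_square algebra_simps)
  then have "center_dist ri rj Th \<le> sqrt ((ri + rj)\<^sup>2)"
    unfolding center_dist_def by (rule real_sqrt_le_mono)
  then show ?thesis using assms by simp
qed

lemma add_le_center_dist:
  assumes "0 \<le> ri" "0 \<le> rj" "0 \<le> cos Th"
  shows "2 * (ri + rj) \<le> 3 * center_dist ri rj Th"
proof (rule power2_le_imp_le)
  have "(2 * (ri + rj))\<^sup>2 \<le> 8 * (ri\<^sup>2 + rj\<^sup>2)"
    using zero_le_power2[of "ri - rj"] by (simp add: power2_eq_square algebra_simps)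
  also have "\<dots> \<le> 9 * (ri\<^sup>2 + rj\<^sup>2 + 2 * ri * rj * cos Th)"
    using assms by simp
  also have "\<dots> = (3 * center_dist ri rj Th)\<^sup>2"
    by (simp add: power_mult_distrib center_dist_sq)
  finally show "(2 * (ri + rj))\<^sup>2 \<le> (3 * center_dist ri rj Th)\<^sup>2" .
  show "0 \<le> 3 * center_dist ri rj Th" by (simp add: center_dist_nonneg)
qed

text \<open>With k_ij = cos Theta_ij this is the Gram determinant
  |A1 - A0|^2 |A2 - A0|^2 - ((A1 - A0) \<bullet> (A2 - A0))^2, i.e. (2 area (A0 A1 A2))^2.\<close>
definition centers_gram :: "real \<Rightarrow> real \<Rightarrow> real \<Rightarrow> real \<Rightarrow> real \<Rightarrow> real \<Rightarrow> real" where
  "centers_gram r0 r1 r2 k01 k02 k12 =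
     r0\<^sup>2 * r2\<^sup>2 * (1 - k02\<^sup>2) + r0\<^sup>2 * r1\<^sup>2 * (1 - k01\<^sup>2) + r1\<^sup>2 * r2\<^sup>2 * (1 - k12\<^sup>2)
     + 2 * r0 * r1\<^sup>2 * r2 * k02 + 2 * r0 * r1 * r2\<^sup>2 * k01 + 2 * r0\<^sup>2 * r1 * r2 * k01 * k02
     + 2 * r0\<^sup>2 * r1 * r2 * k12 + 2 * r0 * r1\<^sup>2 * r2 * k01 * k12 + 2 * r0 * r1 * r2\<^sup>2 * k02 * k12"

text \<open>Equal to -(a^3 b / r0) times the partial derivative of cos Phi0 in r1,
  where a = |A0 A1| and b = |A0 A2|.\<close>
definition centers_angle_slope :: "real \<Rightarrow> real \<Rightarrow> real \<Rightarrow> real \<Rightarrow> real \<Rightarrow> real \<Rightarrow> real" where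
  "centers_angle_slope r0 r1 r2 k01 k02 k12 =
     r0 * r1 * (1 - k01\<^sup>2) + r2 * k02 * (r1 + r0 * k01) + r2 * k12 * (r0 + r1 * k01)"

lemma centers_gram_eq:
  fixes r0 r1 r2 T01 T02 T12 :: real
  defines "a \<equiv> center_dist r0 r1 T01" and "b \<equiv> center_dist r0 r2 T02" and "c \<equiv> center_dist r1 r2 T12"
  shows "4 * a\<^sup>2 * b\<^sup>2 - (a\<^sup>2 + b\<^sup>2 - c\<^sup>2)\<^sup>2 = 4 * centers_gram r0 r1 r2 (cos T01) (cos T02) (cos T12)"
  unfolding a_def b_def c_def center_dist_sq centers_gram_def
  by (simp add: algebra_simps power2_eq_square)

lemma centers_gram_pos:
  fixes r0 r1 r2 k01 k02 k12 :: real
  assumes "0 < r0" "0 < r1" "0 < r2" "0 \<le> k01" "k01 \<le> 1" "0 \<le> k02" "k02 \<le> 1" "0 \<le> k12" "k12 \<le> 1"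
  shows "0 < centers_gram r0 r1 r2 k01 k02 k12"
proof -
  have "0 \<le> 1 - k01\<^sup>2" "0 \<le> 1 - k02\<^sup>2" "0 \<le> 1 - k12\<^sup>2"
    using assms by (simp_all add: power_le_one)
  moreover have "0 < r1\<^sup>2 * r2\<^sup>2 * (1 - k12\<^sup>2) + 2 * r0\<^sup>2 * r1 * r2 * k12"
  proof (cases "k12 = 1")
    case False
    then have "k12\<^sup>2 < 1" using assms by (simp add: abs_square_less_1)
    then show ?thesis using assms by (simp add: add_pos_nonneg)
  qed (use assms in simp)
  ultimately show ?thesis
    unfolding centers_gram_def using assms
    by (smt (verit) mult_nonneg_nonneg zero_le_power2)
qed

lemma centers_angle_slope_nonneg:
  fixes r0 r1 r2 k01 k02 k12 :: real
  assumes "0 \<le> r0" "0 \<le> r1" "0 \<le> r2" "0 \<le> k01" "k01 \<le> 1" "0 \<le> k02" "0 \<le> k12"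
  shows "0 \<le> centers_angle_slope r0 r1 r2 k01 k02 k12"
proof -
  have "0 \<le> 1 - k01\<^sup>2" using assms by (simp add: power_le_one)
  then show ?thesis
    unfolding centers_angle_slope_def using assms by (simp add: add_nonneg_nonneg)
qed

lemma centers_angle_slope_le_gram:
  fixes r0 r1 r2 k01 k02 k12 :: real
  assumes "0 \<le> r0" "0 \<le> r1" "0 \<le> r2" "0 \<le> k01" "k01 \<le> 1" "0 \<le> k02" "k02 \<le> 1" "0 \<le> k12" "k12 \<le> 1"
  shows "r0 * r1 * (r0 + r2) * centers_angle_slope r0 r1 r2 k01 k02 k12
           \<le> 8 * (r0 + r1) * centers_gram r0 r1 r2 k01 k02 k12"
proof -
  have squares: "0 \<le> 1-k01^2" "0 \<le> 1-k02^2" "0 \<le> 1-k12^2" using assms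
    by (simp_all add: power_le_one)
  txt \<open>Twice the difference of the two sides is a sum of nonnegative terms:\<close>
  have "0 \<le> 16*r0^3*r2^2*(1-k02^2)
     + r0^3*r1^2*(1-k01^2)*(13 + k12)
     + r0*r1^2*r2^2*(1-k12)*(13 + 16*k12 + k01^2 + 2*(1-k02))
     + 30*r1^2*r2*r0^2*k02
     + 2*r1*r2^2*r0^2*k01*(16 - k02)
     + 30*r1*r2*r0^3*k01*k02
     + 30*r1*r2*r0^3*k12
     + 30*r1^2*r2*r0^2*k01*k12
     + 30*r1*r2^2*r0^2*k02*k12
     + 2*r1*r0^2*r2^2*(1-k02)*(8*(1+k02) - k12)
     + 16*r1^3*r0^2*(1-k01^2)
     + 16*r1^3*r2^2*(1-k12^2)
     + 32*r1^3*r2*r0*k02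
     + 2*r1^2*r2^2*r0*k01*(16-k12)
     + 32*r1^2*r2*r0^2*k01*k02
     + 2*r1^2*r2*r0^2*k12*(15+k01^2)
     + 32*r1^3*r2*r0*k01*k12
     + 30*r1^2*r2^2*r0*k02*k12
     + (1-k01^2)*(1-k12)*r0*r1^2*(r0-r2)^2"
    using assms squares
    by (intro add_nonneg_nonneg mult_nonneg_nonneg) (auto simp: power2_eq_square)
  also have "\<dots> = 2*(8*(r0+r1)*(r0^2*r2^2*(1-k02^2) + r0^2*r1^2*(1-k01^2) + r1^2*r2^2*(1-k12^2) + 2*r1^2*r2*r0*k02 + 2*r1*r2^2*r0*k01
       + 2*r1*r2*r0^2*k01*k02 + 2*r1*r2*r0^2*k12 + 2*r1^2*r2*r0*k01*k12 + 2*r1*r2^2*r0*k02*k12) -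
     r0*r1*(r0+r2)*(r0*r1*(1-k01^2) + r2*k02*(r1+r0*k01) + r2*k12*(r0+r1*k01)))"
    by (simp add: algebra_simps power2_eq_square power3_eq_cube)
  finally show ?thesis
    unfolding centers_angle_slope_def centers_gram_def by (simp add: algebra_simps)
qed


lemma centers_angle_slope_center_dist_le:
  fixes r0 r1 r2 T01 T02 T12 :: real
  assumes r0: "0 < r0" and r1: "0 < r1" and r2: "0 < r2"
    and T: "T01 \<in> {0..pi/2}" "T02 \<in> {0..pi/2}" "T12 \<in> {0..pi/2}"
  shows "r0 * r1 * centers_angle_slope r0 r1 r2 (cos T01) (cos T02) (cos T12) * center_dist r0 r2 T02
           \<le> 12 * centers_gram r0 r1 r2 (cos T01) (cos T02) (cos T12) * center_dist r0 r1 T01"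
proof -
  define E M where "E = centers_gram r0 r1 r2 (cos T01) (cos T02) (cos T12)"
    and "M = centers_angle_slope r0 r1 r2 (cos T01) (cos T02) (cos T12)"
  note cos = cos_bounds_right_angle[OF T(1)] cos_bounds_right_angle[OF T(2)]
    cos_bounds_right_angle[OF T(3)]
  have "0 \<le> M"
    unfolding M_def using r0 r1 r2 cos by (intro centers_angle_slope_nonneg) simp_all
  have "r0 * r1 * M * center_dist r0 r2 T02 \<le> r0 * r1 * M * (r0 + r2)"
    using center_dist_le_add[of r0 r2 T02] \<open>0 \<le> M\<close> r0 r1 r2 by (intro mult_left_mono) simp_all
  also have "\<dots> \<le> 8 * (r0 + r1) * E"
    using centers_angle_slope_le_gram[of r0 r1 r2 "cos T01" "cos T02" "cos T12"] r0 r1 r2 cos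
    by (simp add: E_def M_def mult_ac)
  also have "\<dots> \<le> 12 * E * center_dist r0 r1 T01"
    using add_le_center_dist[of r0 r1 T01] r0 r1 r2 cos centers_gram_pos[of r0 r1 r2] by (simp add: E_def)
  finally show ?thesis unfolding E_def M_def .
qed

lemma Phi0_has_log_radius_derivative:
  fixes r0 r1 r2 T01 T02 T12 :: real
  defines "a \<equiv> center_dist r0 r1 T01"
    and "E \<equiv> centers_gram r0 r1 r2 (cos T01) (cos T02) (cos T12)"
  assumes r0: "0 < r0" and r1: "0 < r1" and r2: "0 < r2"
    and T: "T01 \<in> {0..pi/2}" "T02 \<in> {0..pi/2}" "T12 \<in> {0..pi/2}"
  shows "((\<lambda>u. Phi0 r0 (exp u) r2 T01 T02 T12) has_real_derivative
           r0 * r1 * centers_angle_slope r0 r1 r2 (cos T01) (cos T02) (cos T12) / (a\<^sup>2 * sqrt E))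
         (at (ln r1))"
proof -
  define X Z where "X u = r0\<^sup>2 + (exp u)\<^sup>2 + 2 * r0 * exp u * cos T01"
    and "Z u = (exp u)\<^sup>2 + r2\<^sup>2 + 2 * exp u * r2 * cos T12" for u
  define Y where "Y = r0\<^sup>2 + r2\<^sup>2 + 2 * r0 * r2 * cos T02"
  note cos = cos_bounds_right_angle[OF T(1)] cos_bounds_right_angle[OF T(2)]
    cos_bounds_right_angle[OF T(3)]
  have Phi0_eq: "(\<lambda>u. Phi0 r0 (exp u) r2 T01 T02 T12)
      = (\<lambda>u. arccos ((X u + Y - Z u) / (2 * sqrt (X u) * sqrt Y)))"
    unfolding Phi0_def tri_angle_def center_dist_sq unfolding center_dist_def X_def Y_def Z_def
    by simp
  have dX: "(X has_real_derivative (2 * r1 + 2 * r0 * cos T01) * r1) (at (ln r1))"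
    unfolding X_def using r1 by (auto intro!: derivative_eq_intros simp: algebra_simps)
  have dZ: "(Z has_real_derivative (2 * r1 + 2 * r2 * cos T12) * r1) (at (ln r1))"
    unfolding Z_def using r1 by (auto intro!: derivative_eq_intros simp: algebra_simps)
  have X: "X (ln r1) = a\<^sup>2" and Z: "Z (ln r1) = (center_dist r1 r2 T12)\<^sup>2"
    and Y: "Y = (center_dist r0 r2 T02)\<^sup>2"
    using r1 by (simp_all add: X_def Z_def Y_def a_def center_dist_sq)
  have "0 < a"
    using add_le_center_dist[of r0 r1 T01] r0 r1 cos by (simp add: a_def)
  have "0 < Y"
    using add_le_center_dist[of r0 r2 T02] r0 r2 cos by (simp add: Y)
  have E: "0 < E"
    unfolding E_def using r0 r1 r2 cos by (intro centers_gram_pos)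
  have D: "4 * X (ln r1) * Y - (X (ln r1) + Y - Z (ln r1))\<^sup>2 = 4 * E"
    unfolding X Y Z a_def E_def by (rule centers_gram_eq)
  show ?thesis
    unfolding Phi0_eq
  proof (rule DERIV_cong[OF has_real_derivative_arccos_cosine_law[OF dX dZ]])
    show "0 < X (ln r1)" using \<open>0 < a\<close> by (simp add: X)
    show "0 < Y" by fact
    show "0 < 4 * X (ln r1) * Y - (X (ln r1) + Y - Z (ln r1))\<^sup>2" using E unfolding D by simp
    have "2 * X (ln r1) * ((2 * r1 + 2 * r2 * cos T12) * r1)
            - (2 * r1 + 2 * r0 * cos T01) * r1 * (X (ln r1) + Z (ln r1) - Y)
          = 4 * r0 * r1 * centers_angle_slope r0 r1 r2 (cos T01) (cos T02) (cos T12)"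
      using r1 by (simp add: X_def Y_def Z_def centers_angle_slope_def algebra_simps power2_eq_square)
    moreover have "sqrt (4 * E) = 2 * sqrt E" by (simp add: real_sqrt_mult)
    ultimately show "(2 * X (ln r1) * ((2 * r1 + 2 * r2 * cos T12) * r1)
            - (2 * r1 + 2 * r0 * cos T01) * r1 * (X (ln r1) + Z (ln r1) - Y))
          / (2 * X (ln r1) * sqrt (4 * X (ln r1) * Y - (X (ln r1) + Y - Z (ln r1))\<^sup>2))
        = r0 * r1 * centers_angle_slope r0 r1 r2 (cos T01) (cos T02) (cos T12) / (a\<^sup>2 * sqrt E)"
      unfolding D by (simp add: X)
  qed
qed

lemma Phi0_log_radius_deriv_le:
  fixes r0 r1 r2 T01 T02 T12 :: real
  assumes r0: "0 < r0" and r1: "0 < r1" and r2: "0 < r2"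
    and T: "T01 \<in> {0..pi/2}" "T02 \<in> {0..pi/2}" "T12 \<in> {0..pi/2}"
  shows "deriv (\<lambda>u. Phi0 r0 (exp u) r2 T01 T02 T12) (ln r1) \<le> 12 * Phi0 r0 r1 r2 T01 T02 T12"
proof -
  define a b where "a = center_dist r0 r1 T01" and "b = center_dist r0 r2 T02"
  define E M where "E = centers_gram r0 r1 r2 (cos T01) (cos T02) (cos T12)"
    and "M = centers_angle_slope r0 r1 r2 (cos T01) (cos T02) (cos T12)"
  note cos = cos_bounds_right_angle[OF T(1)] cos_bounds_right_angle[OF T(2)]
    cos_bounds_right_angle[OF T(3)]
  have "0 < a" "0 < b"
    using add_le_center_dist[of r0 r1 T01] add_le_center_dist[of r0 r2 T02] r0 r1 r2 cos
    by (simp_all add: a_def b_def)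
  have "0 < E"
    unfolding E_def using r0 r1 r2 cos by (intro centers_gram_pos)
  have "deriv (\<lambda>u. Phi0 r0 (exp u) r2 T01 T02 T12) (ln r1) = r0 * r1 * M / (a\<^sup>2 * sqrt E)"
    unfolding a_def E_def M_def using r0 r1 r2 T
    by (intro DERIV_imp_deriv Phi0_has_log_radius_derivative)
  also have "\<dots> = r0 * r1 * M * b / (a\<^sup>2 * b * sqrt E)"
    using \<open>0 < b\<close> by simp
  also have "\<dots> \<le> 12 * E * a / (a\<^sup>2 * b * sqrt E)"
    using centers_angle_slope_center_dist_le[OF r0 r1 r2 T] \<open>0 < a\<close> \<open>0 < b\<close> \<open>0 < E\<close>
    unfolding a_def b_def E_def M_def by (intro divide_right_mono) simp_all
  also have "\<dots> = 12 * (sqrt (4 * E) / (2 * a * b))"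
    using \<open>0 < a\<close> \<open>0 < b\<close> \<open>0 < E\<close> real_sqrt_mult_self[of E]
    by (simp add: real_sqrt_mult field_simps power2_eq_square)
  also have "\<dots> \<le> 12 * Phi0 r0 r1 r2 T01 T02 T12"
    using sine_le_tri_angle[OF \<open>0 < a\<close> \<open>0 < b\<close>, of "center_dist r1 r2 T12"] \<open>0 < E\<close>
    unfolding centers_gram_eq a_def b_def E_def by (simp add: Phi0_def)
  finally show ?thesis .
qed

lemma Phi0_swap: "Phi0 r0 r1 r2 T01 T02 T12 = Phi0 r0 r2 r1 T02 T01 T12"
  unfolding Phi0_def tri_angle_def center_dist_def by (simp add: ac_simps)

theorem lemma3p3:
  shows "\<exists>C::real. \<forall>r0 r1 r2 T01 T02 T12 (j::nat).
    r0 > 0 \<longrightarrow> r1 > 0 \<longrightarrow> r2 > 0 \<longrightarrow>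
    T01 \<in> {0..pi/2} \<longrightarrow> T02 \<in> {0..pi/2} \<longrightarrow> T12 \<in> {0..pi/2} \<longrightarrow>
    j \<in> {1,2} \<longrightarrow>
    deriv (\<lambda>u. Phi0 r0 (if j = 1 then exp u else r1) (if j = 2 then exp u else r2)
                     T01 T02 T12)
          (ln (if j = 1 then r1 else r2))
      \<le> C * Phi0 r0 r1 r2 T01 T02 T12"
proof (intro exI[of _ 12] allI impI)
  fix r0 r1 r2 T01 T02 T12 :: real and j :: nat
  assume r: "r0 > 0" "r1 > 0" "r2 > 0"
    and T: "T01 \<in> {0..pi/2}" "T02 \<in> {0..pi/2}" "T12 \<in> {0..pi/2}" and "j \<in> {1,2}"
  then consider "j = 1" | "j = 2" by blast
  then show "deriv (\<lambda>u. Phi0 r0 (if j = 1 then exp u else r1) (if j = 2 then exp u else r2)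
                     T01 T02 T12) (ln (if j = 1 then r1 else r2))
      \<le> 12 * Phi0 r0 r1 r2 T01 T02 T12"
  proof cases
    case 1
    then show ?thesis using Phi0_log_radius_deriv_le[OF r T] by simp
  next
    case 2
    then show ?thesis
      using Phi0_log_radius_deriv_le[OF r(1,3,2) T(2,1,3)] by (simp add: Phi0_swap[of r0 r1])
  qed
qed

end
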